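(* Consider the Normal Partizan Domination game on the star $K_{1,n}$ ($n\geq 1$) in which every vertex has color $C$. Its value is $*$ if $n$ is odd and $*2$ if $n$ is even.
   Context: Normal Partizan Domination game: a finite graph $G$ has each vertex colored $A$, $B$ or $C$. Alice and Bob alternately select a vertex; Alice may only select vertices colored $A$ or $C$, Bob only vertices colored $B$ or $C$. A vertex $u$ dominates $v$ if $u=v$ or $uv$ is an edge. A vertex may be selected only if it is playable, i.e. it dominates at least one vertex not dominated by the previously selected vertices; the game ends when the selected vertices form a dominating set. Under normal play the player unable to move loses. The game is regarded as a partizan combinatorial game with Alice as Left and Bob as Right, and its value is its value in Conway's combinatorial game theory ($\{X\mid Y\}$ has Left options $X$ and Right options $Y$; $G=H$ iff $G+(-H)$ is a second-player win). Nimbers: $*=\{0\mid 0\}$, $*2=\{0,*\mid 0,*\}$. *)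

theory Defs
  imports Main
begin

datatype game = Game "game list" "game list"

primrec left_opts :: "game \<Rightarrow> game list" where
  "left_opts (Game L R) = L"
primrec right_opts :: "game \<Rightarrow> game list" where
  "right_opts (Game L R) = R"

text \<open>wins G = (Left moving first wins G, Right moving first wins G), normal play.\<close>
primrec wins :: "game \<Rightarrow> bool \<times> bool" where
  "wins (Game L R) =
     (list_ex (\<lambda>p. \<not> snd p) (map wins L), list_ex (\<lambda>p. \<not> fst p) (map wins R))"

definition second_player_win :: "game \<Rightarrow> bool" where
  "second_player_win G \<longleftrightarrow> \<not> fst (wins G) \<and> \<not> snd (wins G)"

primrec game_neg :: "game \<Rightarrow> game" where
  "game_neg (Game L R) = Game (map game_neg R) (map game_neg L)"

lemma game_size_mem:
  "x \<in> set L \<Longrightarrow> size x < size (Game L R)"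
  "x \<in> set R \<Longrightarrow> size x < size (Game L R)"
  by (auto dest: size_list_estimation'[of x _ _ size, OF _ order_refl])

function game_add :: "game \<Rightarrow> game \<Rightarrow> game" where
  "game_add (Game L R) (Game L' R') =
     Game (map (\<lambda>x. game_add x (Game L' R')) L @ map (\<lambda>y. game_add (Game L R) y) L')
          (map (\<lambda>x. game_add x (Game L' R')) R @ map (\<lambda>y. game_add (Game L R) y) R')"
  by pat_completeness auto
termination
  by (relation "measure (\<lambda>(x, y). size x + size y)")
     (auto dest: game_size_mem)

definition game_eq :: "game \<Rightarrow> game \<Rightarrow> bool" where
  "game_eq G H \<longleftrightarrow> second_player_win (game_add G (game_neg H))"

definition game_zero :: game where "game_zero = Game [] []"
definition game_star :: game where "game_star = Game [game_zero] [game_zero]"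
definition game_star2 :: game where
  "game_star2 = Game [game_zero, game_star] [game_zero, game_star]"

datatype color = ColA | ColB | ColC

definition cnbhd :: "nat set \<Rightarrow> (nat \<Rightarrow> nat \<Rightarrow> bool) \<Rightarrow> nat \<Rightarrow> nat set" where
  "cnbhd V E v = {u \<in> V. u = v \<or> E v u}"

definition playable :: "nat set \<Rightarrow> (nat \<Rightarrow> nat \<Rightarrow> bool) \<Rightarrow> nat set \<Rightarrow> nat \<Rightarrow> bool" where
  "playable V E D v \<longleftrightarrow> v \<in> V \<and> (\<exists>u \<in> cnbhd V E v. u \<notin> D)"

text \<open>The game from the position in which D is the set of vertices dominated so far.
  Alice (Left) may select vertices colored A or C, Bob (Right) those colored B or C.\<close>
function dom_game :: "nat set \<Rightarrow> (nat \<Rightarrow> nat \<Rightarrow> bool) \<Rightarrow> (nat \<Rightarrow> color) \<Rightarrow> nat set \<Rightarrow> game" where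
  "dom_game V E c D =
    (if finite V then
       Game (map (\<lambda>v. dom_game V E c (D \<union> cnbhd V E v))
                 (filter (\<lambda>v. c v \<noteq> ColB \<and> playable V E D v) (sorted_list_of_set V)))
            (map (\<lambda>v. dom_game V E c (D \<union> cnbhd V E v))
                 (filter (\<lambda>v. c v \<noteq> ColA \<and> playable V E D v) (sorted_list_of_set V)))
     else Game [] [])"
  by pat_completeness auto
termination
proof (relation "measure (\<lambda>(V, E, c, D). card (V - D))", goal_cases)
  case 1 then show ?case by simp
next
  case (2 V E c D v)
  then obtain u where "u \<in> cnbhd V E v" "u \<notin> D" by (auto simp: playable_def)
  then have "V - (D \<union> cnbhd V E v) \<subset> V - D" by (auto simp: cnbhd_def)
  with 2 show ?case by (simp add: psubset_card_mono)
next
  case (3 V E c D v)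
  then obtain u where "u \<in> cnbhd V E v" "u \<notin> D" by (auto simp: playable_def)
  then have "V - (D \<union> cnbhd V E v) \<subset> V - D" by (auto simp: cnbhd_def)
  with 3 show ?case by (simp add: psubset_card_mono)
qed

definition domination_game :: "nat set \<Rightarrow> (nat \<Rightarrow> nat \<Rightarrow> bool) \<Rightarrow> (nat \<Rightarrow> color) \<Rightarrow> game" where
  "domination_game V E c = dom_game V E c {}"

text \<open>The star K_{1,n}: vertex set {0..n}, centre 0 adjacent to each leaf 1..n.\<close>
definition star_edge :: "nat \<Rightarrow> nat \<Rightarrow> bool" where
  "star_edge i j \<longleftrightarrow> (i = 0 \<and> j \<noteq> 0) \<or> (j = 0 \<and> i \<noteq> 0)"

end

theory Submission
  imports Defs
begin

text \<open>Colouring every vertex C makes the game impartial, so by the mex rule of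
  Sprague--Grundy theory each position is equivalent to a nimber. As long as the
  centre has not been played, no leaf has been played either; afterwards the centre
  is dominated. In both situations, with k leaves still undominated, the options are
  0 (play the centre, if k > 0) and the position with k - 1 undominated leaves (play
  such a leaf). Hence the value is 0, *, *2, *, *2, ... for k = 0, 1, 2, 3, 4, ...,
  and the starting position has k = n.\<close>

function nim :: "nat \<Rightarrow> game" where
  "nim k = Game (map nim [0..<k]) (map nim [0..<k])"
  by auto
termination
  by (relation "measure id") auto

declare nim.simps [simp del]

lemma nim_0_1_2: "nim 0 = game_zero" "nim 1 = game_star" "nim 2 = game_star2"
  by (simp_all add: nim.simps game_zero_def game_star_def game_star2_def numeral_2_eq_2)

lemma game_neg_nim: "game_neg (nim k) = nim k"
proof (induction k rule: less_induct)
  case (less k)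
  then have "map game_neg (map nim [0..<k]) = map nim [0..<k]" by simp
  then show ?case by (subst (1 2) nim.simps) simp
qed

lemma wins_game_add:
  "wins (game_add (Game L R) (Game L' R')) =
    ((\<exists>x\<in>set L. \<not> snd (wins (game_add x (Game L' R')))) \<or>
       (\<exists>y\<in>set L'. \<not> snd (wins (game_add (Game L R) y))),
     (\<exists>x\<in>set R. \<not> fst (wins (game_add x (Game L' R')))) \<or>
       (\<exists>y\<in>set R'. \<not> fst (wins (game_add (Game L R) y))))"
  by (auto simp: list_ex_iff)

text \<open>G = *m tested only against *0, ..., *N: this family of comparisons is closed under
  moves in the nimber summand, so the mex rule below can be proved by induction on j.\<close>
definition nim_equiv_upto :: "nat \<Rightarrow> game \<Rightarrow> nat \<Rightarrow> bool" where
  "nim_equiv_upto N G m \<longleftrightarrow> (\<forall>j\<le>N. wins (game_add G (nim j)) = (m \<noteq> j, m \<noteq> j))"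

lemma nim_equiv_upto_unique:
  assumes "nim_equiv_upto N G i" "nim_equiv_upto N G m" "m \<le> N"
  shows "i = m"
  using assms unfolding nim_equiv_upto_def by fastforce

lemma game_eq_nim_if_nim_equiv_upto:
  assumes "nim_equiv_upto N G m" "m \<le> N"
  shows "game_eq G (nim m)"
  using assms by (simp add: nim_equiv_upto_def game_eq_def second_player_win_def game_neg_nim)

lemma nim_equiv_upto_mex:
  assumes options: "\<forall>x\<in>set xs. \<exists>i. nim_equiv_upto N x i \<and> i \<noteq> m"
    and mex: "\<forall>i<m. \<exists>x\<in>set xs. nim_equiv_upto N x i"
  shows "nim_equiv_upto N (Game xs xs) m"
  unfolding nim_equiv_upto_def
proof (intro allI impI)
  fix j assume "j \<le> N"
  then show "wins (game_add (Game xs xs) (nim j)) = (m \<noteq> j, m \<noteq> j)"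
  proof (induction j rule: less_induct)
    case (less j)
    define ys where "ys = map nim [0..<j]"
    have nim_j: "nim j = Game ys ys" unfolding ys_def by (rule nim.simps)
    have option_wins: "\<not> snd (wins (game_add x (nim j))) \<longleftrightarrow> nim_equiv_upto N x j"
      "\<not> fst (wins (game_add x (nim j))) \<longleftrightarrow> nim_equiv_upto N x j"
      if "nim_equiv_upto N x i" for x i
      using that less.prems nim_equiv_upto_unique[OF that _ less.prems]
      by (auto simp: nim_equiv_upto_def)
    \<comment> \<open>the winning first move: G to an option equal to *j if j < m, or *j to *m if m < j\<close>
    have "(\<exists>x\<in>set xs. nim_equiv_upto N x j) \<longleftrightarrow> j < m" if "j \<le> m"
      using options mex that less.prems nim_equiv_upto_unique by (metis le_neq_implies_less)
    then have options_side: "(\<exists>x\<in>set xs. nim_equiv_upto N x j) \<or> m < j \<longleftrightarrow> m \<noteq> j"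
      by (cases "j \<le> m") auto
    have nim_side: "(\<exists>y\<in>set ys. \<not> snd (wins (game_add (Game xs xs) y))) \<longleftrightarrow> m < j"
      "(\<exists>y\<in>set ys. \<not> fst (wins (game_add (Game xs xs) y))) \<longleftrightarrow> m < j"
      using less.IH less.prems by (auto simp: ys_def)
    have "(\<exists>x\<in>set xs. \<not> snd (wins (game_add x (nim j)))) \<longleftrightarrow> (\<exists>x\<in>set xs. nim_equiv_upto N x j)"
      "(\<exists>x\<in>set xs. \<not> fst (wins (game_add x (nim j)))) \<longleftrightarrow> (\<exists>x\<in>set xs. nim_equiv_upto N x j)"
      using options option_wins by meson+
    with nim_side options_side show ?case
      unfolding nim_j wins_game_add by (simp only: nim_j[symmetric])
  qed
qed

declare dom_game.simps [simp del]

lemma dom_game_all_C: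
  assumes "finite V"
  obtains xs where "dom_game V E (\<lambda>_. ColC) D = Game xs xs"
    and "set xs = (\<lambda>v. dom_game V E (\<lambda>_. ColC) (D \<union> cnbhd V E v)) ` {v. playable V E D v}"
proof -
  let ?xs = "map (\<lambda>v. dom_game V E (\<lambda>_. ColC) (D \<union> cnbhd V E v))
               (filter (playable V E D) (sorted_list_of_set V))"
  have "dom_game V E (\<lambda>_. ColC) D = Game ?xs ?xs"
    using assms by (subst dom_game.simps) simp
  moreover have "set ?xs = (\<lambda>v. dom_game V E (\<lambda>_. ColC) (D \<union> cnbhd V E v)) ` {v. playable V E D v}"
    using assms by (auto simp: playable_def)
  ultimately show ?thesis using that by blast
qed

lemma dom_game_dominated:
  assumes "finite V" "V \<subseteq> D"
  shows "dom_game V E c D = Game [] []"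
proof -
  have "\<not> playable V E D v" for v
    using assms(2) by (auto simp: playable_def cnbhd_def)
  with assms(1) show ?thesis by (subst dom_game.simps) simp
qed

lemma cnbhd_star_centre: "cnbhd {0..n} star_edge 0 = {0..n}"
  by (auto simp: cnbhd_def star_edge_def)

lemma cnbhd_star_leaf: "v \<in> {0<..n} \<Longrightarrow> cnbhd {0..n} star_edge v = {0, v}"
  by (auto simp: cnbhd_def star_edge_def)

definition star_value :: "nat \<Rightarrow> nat" where
  "star_value k = (if k = 0 then 0 else if odd k then 1 else 2)"

lemma star_value_Suc_neq: "star_value (Suc k) \<noteq> star_value k"
  by (simp add: star_value_def)

lemma nim_equiv_upto_star_value:
  assumes "\<forall>x\<in>set xs. k > 0 \<and> (nim_equiv_upto N x 0 \<or> nim_equiv_upto N x (star_value (k - 1)))"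
    and "k > 0 \<Longrightarrow> (\<exists>x\<in>set xs. nim_equiv_upto N x 0) \<and>
                    (\<exists>x\<in>set xs. nim_equiv_upto N x (star_value (k - 1)))"
  shows "nim_equiv_upto N (Game xs xs) (star_value k)"
proof (rule nim_equiv_upto_mex)
  have "star_value k \<noteq> 0" "star_value (k - 1) \<noteq> star_value k" if "k > 0"
    using that star_value_Suc_neq[of "k - 1"] by (simp_all add: star_value_def)
  with assms(1) show "\<forall>x\<in>set xs. \<exists>i. nim_equiv_upto N x i \<and> i \<noteq> star_value k"
    by metis
  have "k > 0 \<and> (i = 0 \<or> i = star_value (k - 1))" if "i < star_value k" for i
    using that by (auto simp: star_value_def split: if_splits)
  with assms(2) show "\<forall>i<star_value k. \<exists>x\<in>set xs. nim_equiv_upto N x i"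
    by blast
qed

abbreviation star_game :: "nat \<Rightarrow> nat set \<Rightarrow> game" where
  "star_game n D \<equiv> dom_game {0..n} star_edge (\<lambda>_. ColC) D"

lemma star_playable_iff:
  assumes "n \<ge> 1" "0 \<in> D \<or> D = {}"
  shows "playable {0..n} star_edge D v \<longleftrightarrow> (v = 0 \<and> {0<..n} - D \<noteq> {}) \<or> v \<in> {0<..n} - D"
proof (cases "v = 0")
  case True
  have "{0<..n} - D \<noteq> {}" if "u \<in> {0..n}" "u \<notin> D" for u
  proof (cases "u = 0")
    case True
    with that assms have "D = {}" by auto
    with assms(1) show ?thesis by auto
  next
    case False
    with that have "u \<in> {0<..n} - D" by simp
    then show ?thesis by blast
  qed
  with True show ?thesis by (auto simp: playable_def cnbhd_star_centre)
next
  case False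
  then show ?thesis using assms by (auto simp: playable_def cnbhd_star_leaf)
qed

lemma star_game_moves:
  assumes "n \<ge> 1" "D \<subseteq> {0..n}" "0 \<in> D \<or> D = {}"
  obtains xs where "star_game n D = Game xs xs"
    and "\<And>x. x \<in> set xs \<longleftrightarrow> ({0<..n} - D \<noteq> {} \<and> x = star_game n {0..n})
                           \<or> (\<exists>v\<in>{0<..n} - D. x = star_game n (insert 0 (insert v D)))"
proof -
  let ?move = "\<lambda>v. star_game n (D \<union> cnbhd {0..n} star_edge v)"
  obtain xs where game: "star_game n D = Game xs xs"
    and moves: "set xs = ?move ` {v. playable {0..n} star_edge D v}"
    using dom_game_all_C by blast
  have move_centre: "?move 0 = star_game n {0..n}"
    using assms(2) by (simp add: cnbhd_star_centre Un_absorb1)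
  have "x \<in> set xs \<longleftrightarrow> ({0<..n} - D \<noteq> {} \<and> x = star_game n {0..n})
                        \<or> (\<exists>v\<in>{0<..n} - D. x = star_game n (insert 0 (insert v D)))" for x
  proof -
    have "x \<in> set xs \<longleftrightarrow> (\<exists>v. playable {0..n} star_edge D v \<and> x = ?move v)"
      unfolding moves by blast
    also have "\<dots> \<longleftrightarrow> ({0<..n} - D \<noteq> {} \<and> x = ?move 0) \<or> (\<exists>v\<in>{0<..n} - D. x = ?move v)"
      unfolding star_playable_iff[OF assms(1,3)] by blast
    also have "\<dots> \<longleftrightarrow> ({0<..n} - D \<noteq> {} \<and> x = star_game n {0..n})
                        \<or> (\<exists>v\<in>{0<..n} - D. x = star_game n (insert 0 (insert v D)))"
      by (auto simp: move_centre cnbhd_star_leaf)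
    finally show ?thesis .
  qed
  with game show ?thesis by (rule that)
qed

lemma card_leaves_after_leaf_move:
  fixes n :: nat
  assumes "v \<in> {0<..n} - D"
  shows "card ({0<..n} - insert 0 (insert v D)) = card ({0<..n} - D) - 1"
proof -
  have "{0<..n} - insert 0 (insert v D) = ({0<..n} - D) - {v}" by auto
  with assms show ?thesis by (simp add: card_Diff_singleton)
qed

lemma star_game_nim_equiv:
  assumes "n \<ge> 1" "D \<subseteq> {0..n}" "0 \<in> D \<or> D = {}"
  shows "nim_equiv_upto N (star_game n D) (star_value (card ({0<..n} - D)))"
  using assms(2,3)
proof (induction "card ({0<..n} - D)" arbitrary: D rule: less_induct)
  case less
  define k where "k = card ({0<..n} - D)"
  have k_pos: "k > 0 \<longleftrightarrow> {0<..n} - D \<noteq> {}"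
    unfolding k_def by (simp add: card_gt_0_iff)
  obtain xs where game: "star_game n D = Game xs xs"
    and moves: "\<And>x. x \<in> set xs \<longleftrightarrow> ({0<..n} - D \<noteq> {} \<and> x = star_game n {0..n})
                  \<or> (\<exists>v\<in>{0<..n} - D. x = star_game n (insert 0 (insert v D)))"
    by (rule star_game_moves[OF assms(1) less.prems]) (rule that)
  have centre_move: "nim_equiv_upto N (star_game n {0..n}) 0"
    using nim_equiv_upto_mex[of "[]"] by (simp add: dom_game_dominated)
  have leaf_move: "nim_equiv_upto N (star_game n (insert 0 (insert v D))) (star_value (k - 1))"
    if v: "v \<in> {0<..n} - D" for v
  proof -
    have card: "card ({0<..n} - insert 0 (insert v D)) = k - 1"
      using card_leaves_after_leaf_move[OF v] by (simp add: k_def)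
    have "k > 0" using v k_pos by blast
    have "nim_equiv_upto N (star_game n (insert 0 (insert v D)))
        (star_value (card ({0<..n} - insert 0 (insert v D))))"
      by (rule less.hyps) (use v card \<open>k > 0\<close> less.prems in \<open>auto simp: k_def [symmetric]\<close>)
    with card show ?thesis by simp
  qed
  have "k > 0 \<and> (nim_equiv_upto N x 0 \<or> nim_equiv_upto N x (star_value (k - 1)))"
    if "x \<in> set xs" for x
  proof -
    from that moves k_pos consider "k > 0" "x = star_game n {0..n}"
      | v where "v \<in> {0<..n} - D" "x = star_game n (insert 0 (insert v D))"
      by blast
    then show ?thesis
    proof cases
      case 1
      then show ?thesis using centre_move by blast
    next
      case (2 v)
      then show ?thesis using leaf_move k_pos by blast
    qed
  qed
  moreover have "(\<exists>x\<in>set xs. nim_equiv_upto N x 0) \<and>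
      (\<exists>x\<in>set xs. nim_equiv_upto N x (star_value (k - 1)))" if "k > 0"
  proof -
    from that obtain w where w: "w \<in> {0<..n} - D" using k_pos by blast
    then have "star_game n {0..n} \<in> set xs" "star_game n (insert 0 (insert w D)) \<in> set xs"
      using moves by blast+
    then show ?thesis using centre_move leaf_move w that by blast
  qed
  ultimately show ?case unfolding game k_def[symmetric] by (blast intro: nim_equiv_upto_star_value)
qed

theorem theorem5:
  fixes n :: nat
  assumes "n \<ge> 1"
  shows "game_eq (domination_game {0..n} star_edge (\<lambda>_. ColC))
                 (if odd n then game_star else game_star2)"
proof -
  have "nim_equiv_upto 2 (star_game n {}) (star_value n)"
    using star_game_nim_equiv[OF assms, of "{}"] by simp
  then have "game_eq (star_game n {}) (nim (star_value n))"
    by (rule game_eq_nim_if_nim_equiv_upto) (simp add: star_value_def)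
  moreover have "nim (star_value n) = (if odd n then game_star else game_star2)"
    using assms nim_0_1_2 by (auto simp: star_value_def)
  ultimately show ?thesis by (simp add: domination_game_def)
qed

end
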